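(* Let $A_1,A_2\in M_2(\mathbb R)$ have no eigenvalues in $(-\infty,0]$ and satisfy $\operatorname{PD}(A_1)\subset\operatorname{PD}(A_2)$. Then $\|\log A_1\|_2\le\|\log A_2\|_2$ and $\lfloor\log A_1\rfloor_2\ge\lfloor\log A_2\rfloor_2$.
   Context: For $A=\tilde a\mathrm{Id}_2+\tilde b\tilde I+\tilde c\tilde J+\tilde d\tilde K$ (real coefficients, $\tilde I=\begin{pmatrix}0&-1\\1&0\end{pmatrix}$, $\tilde J=\begin{pmatrix}1&0\\0&-1\end{pmatrix}$, $\tilde K=\begin{pmatrix}0&1\\1&0\end{pmatrix}$), the principal disk is $\operatorname{PD}(A)=\overline D(\tilde a+|\tilde b|i,\sqrt{\tilde c^2+\tilde d^2})\subset\mathbb C$. $\|\cdot\|_2$ is the operator norm; $\lfloor X\rfloor_2=\det X/\|X\|_2$ for $X\ne0$, $\lfloor 0\rfloor_2=0$; $\log$ is the principal logarithm. *)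

theory Defs
  imports "HOL-Analysis.Analysis" "HOL-Library.Numeral_Type"
begin

type_synonym rmat2 = "real^2^2"

definition cmat :: "rmat2 \<Rightarrow> complex^2^2" where
  "cmat A = (\<chi> i j. complex_of_real (A $ i $ j))"

definition eigenvalues2 :: "rmat2 \<Rightarrow> complex set" where
  "eigenvalues2 A = {z. \<exists>v::complex^2. v \<noteq> 0 \<and> cmat A *v v = z *s v}"

primrec mpow :: "rmat2 \<Rightarrow> nat \<Rightarrow> rmat2" where
  "mpow L 0 = mat 1"
| "mpow L (Suc k) = L ** mpow L k"

definition mexp :: "rmat2 \<Rightarrow> rmat2" where
  "mexp L = (\<Sum>k. (1 / fact k) *\<^sub>R mpow L k)"

definition mlog :: "rmat2 \<Rightarrow> rmat2" where
  "mlog A = (THE L. mexp L = A \<and> (\<forall>z \<in> eigenvalues2 L. \<bar>Im z\<bar> < pi))"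

definition opnorm2 :: "rmat2 \<Rightarrow> real" where
  "opnorm2 X = onorm (\<lambda>x. X *v x)"

definition floor2 :: "rmat2 \<Rightarrow> real" where
  "floor2 X = (if X = 0 then 0 else det X / opnorm2 X)"

text \<open>Coordinates w.r.t. Id, I~, J~, K~:
  A = a Id + b I~ + c J~ + d K~ means A11 = a+c, A12 = d-b, A21 = b+d, A22 = a-c.\<close>
definition coef_a :: "rmat2 \<Rightarrow> real" where "coef_a A = (A$1$1 + A$2$2) / 2"
definition coef_b :: "rmat2 \<Rightarrow> real" where "coef_b A = (A$2$1 - A$1$2) / 2"
definition coef_c :: "rmat2 \<Rightarrow> real" where "coef_c A = (A$1$1 - A$2$2) / 2"
definition coef_d :: "rmat2 \<Rightarrow> real" where "coef_d A = (A$1$2 + A$2$1) / 2"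

definition PD :: "rmat2 \<Rightarrow> complex set" where
  "PD A = cball (Complex (coef_a A) \<bar>coef_b A\<bar>) (sqrt ((coef_c A)\<^sup>2 + (coef_d A)\<^sup>2))"

end

theory Submission
  imports Defs
begin

text \<open>Write \<open>A = a Id + N\<close> with \<open>N\<close> trace free; then \<open>N\<^sup>2 = s Id\<close> with \<open>s = c\<^sup>2 + d\<^sup>2 - b\<^sup>2\<close>,
  so \<open>log A = \<alpha> Id + \<beta> N\<close> with \<open>\<alpha> \<plusminus> \<beta> \<surd>s = Ln (a \<plusminus> \<surd>s)\<close>, and the integral representation
  \<open>log A = \<integral>\<^sub>0\<^sup>1 (A - Id) (Id + t (A - Id))\<^sup>-\<^sup>1 dt\<close> expresses \<open>\<alpha>\<close> and \<open>\<beta>\<close> as integrals of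
  explicit rational functions of \<open>t\<close>. Identifying \<open>\<real>\<^sup>2\<close> with \<open>\<complex>\<close>, a real 2x2 matrix acts as
  \<open>v \<mapsto> z v + w cnj v\<close>, whence \<open>\<parallel>X\<parallel>\<^sub>2 = \<bar>m\<bar> + r\<close> and \<open>\<lfloor>X\<rfloor>\<^sub>2 = \<bar>m\<bar> - r\<close> when
  \<open>PD(X) = D(m, r)\<close>. It therefore suffices that \<open>log\<close> preserves inclusion of principal disks.
  The integrand is a real Moebius transform of \<open>A\<close>, and a polynomial identity shows that its
  principal disks inherit the inclusion for every \<open>t\<close>; integrating keeps the inclusion because
  the norm of an integral is at most the integral of the norm.\<close>

lemma rmat2_eq_iff:
  "(X::rmat2) = Y \<longleftrightarrow> X$1$1 = Y$1$1 \<and> X$1$2 = Y$1$2 \<and> X$2$1 = Y$2$1 \<and> X$2$2 = Y$2$2"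
  by (auto simp: vec_eq_iff forall_2)

lemma rmat2_mult_entry: "((X::rmat2) ** Y)$i$j = X$i$1 * Y$1$j + X$i$2 * Y$2$j"
  by (simp add: matrix_matrix_mult_def sum_2)

definition discr :: "rmat2 \<Rightarrow> real" where
  "discr X = (coef_c X)\<^sup>2 + (coef_d X)\<^sup>2 - (coef_b X)\<^sup>2"

definition trace_free :: "rmat2 \<Rightarrow> rmat2" where
  "trace_free X = X - coef_a X *\<^sub>R mat 1"

lemma trace_free_sq: "trace_free X ** trace_free X = discr X *\<^sub>R mat 1"
  unfolding rmat2_eq_iff rmat2_mult_entry
  by (simp add: trace_free_def discr_def coef_a_def coef_b_def coef_c_def coef_d_def mat_def
      power2_eq_square field_simps)

lemma coef_scalar_plus_trace_free:
  "coef_a (x *\<^sub>R mat 1 + y *\<^sub>R trace_free X) = x"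
  "coef_b (x *\<^sub>R mat 1 + y *\<^sub>R trace_free X) = y * coef_b X"
  "coef_c (x *\<^sub>R mat 1 + y *\<^sub>R trace_free X) = y * coef_c X"
  "coef_d (x *\<^sub>R mat 1 + y *\<^sub>R trace_free X) = y * coef_d X"
  by (simp_all add: trace_free_def coef_a_def coef_b_def coef_c_def coef_d_def mat_def field_simps)

lemma trace_free_scalar_plus_trace_free:
  "trace_free (x *\<^sub>R mat 1 + y *\<^sub>R trace_free X) = y *\<^sub>R trace_free X"
  by (simp add: trace_free_def [of "x *\<^sub>R mat 1 + y *\<^sub>R trace_free X"] coef_scalar_plus_trace_free)

lemma discr_scalar_plus_trace_free:
  "discr (x *\<^sub>R mat 1 + y *\<^sub>R trace_free X) = y\<^sup>2 * discr X"
  by (simp add: discr_def coef_scalar_plus_trace_free algebra_simps)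

lemma eigenvalues2_iff:
  "z \<in> eigenvalues2 X \<longleftrightarrow> (z - of_real (coef_a X))\<^sup>2 = of_real (discr X)"
proof -
  have "(cmat X - mat z) *v v = cmat X *v v - z *s v" for v
    by (simp add: vec_eq_iff matrix_vector_mult_def mat_def sum_2 forall_2 algebra_simps)
  then have "z \<in> eigenvalues2 X \<longleftrightarrow> \<not> (\<forall>v. (cmat X - mat z) *v v = 0 \<longrightarrow> v = 0)"
    by (auto simp: eigenvalues2_def)
  also have "\<dots> \<longleftrightarrow> det (cmat X - mat z) = 0"
    using invertible_det_nz invertible_left_inverse matrix_left_invertible_ker by metis
  also have "det (cmat X - mat z) = (z - of_real (coef_a X))\<^sup>2 - of_real (discr X)"
    by (simp add: det_2 cmat_def mat_def discr_def coef_a_def coef_b_def coef_c_def coef_d_def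
        power2_eq_square field_simps)
  finally show ?thesis by simp
qed

lemma matrix_add_rdistrib: "(A + B) ** C = A ** C + B ** C"
  by (vector matrix_matrix_mult_def sum.distrib[symmetric] field_simps)

text \<open>Coordinates of \<open>(x + \<epsilon>)\<^sup>n\<close> in the algebra \<open>\<real>[\<epsilon>]/(\<epsilon>\<^sup>2 - \<sigma>)\<close>.\<close>

primrec quad_pow :: "real \<Rightarrow> real \<Rightarrow> nat \<Rightarrow> real \<times> real" where
  "quad_pow x \<sigma> 0 = (1, 0)"
| "quad_pow x \<sigma> (Suc n) =
    (x * fst (quad_pow x \<sigma> n) + \<sigma> * snd (quad_pow x \<sigma> n),
     fst (quad_pow x \<sigma> n) + x * snd (quad_pow x \<sigma> n))"

lemma mpow_scalar_plus:
  assumes "M ** M = \<sigma> *\<^sub>R mat 1"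
  shows "mpow (x *\<^sub>R mat 1 + M) n = fst (quad_pow x \<sigma> n) *\<^sub>R mat 1 + snd (quad_pow x \<sigma> n) *\<^sub>R M"
  by (induction n)
     (simp_all add: assms matrix_add_ldistrib matrix_add_rdistrib matrix_scalar_ac
       scalar_matrix_assoc [symmetric] algebra_simps)

lemma power_quad_pow:
  assumes "\<omega>\<^sup>2 = complex_of_real \<sigma>"
  shows "(of_real x + \<omega>) ^ n = of_real (fst (quad_pow x \<sigma> n)) + of_real (snd (quad_pow x \<sigma> n)) * \<omega>"
  by (induction n) (simp_all add: assms [symmetric] algebra_simps power2_eq_square)

lemma quad_pow_bound:
  "\<bar>fst (quad_pow x \<sigma> n)\<bar> + \<bar>snd (quad_pow x \<sigma> n)\<bar> \<le> (1 + \<bar>x\<bar> + \<bar>\<sigma>\<bar>) ^ n"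
proof (induction n)
  case (Suc n)
  define p q where "p = fst (quad_pow x \<sigma> n)" and "q = snd (quad_pow x \<sigma> n)"
  have "\<bar>x * p + \<sigma> * q\<bar> + \<bar>p + x * q\<bar> \<le> \<bar>x\<bar> * \<bar>p\<bar> + \<bar>\<sigma>\<bar> * \<bar>q\<bar> + (\<bar>p\<bar> + \<bar>x\<bar> * \<bar>q\<bar>)"
    by (intro add_mono order.trans [OF abs_triangle_ineq]) (simp_all add: abs_mult)
  also have "\<dots> \<le> (1 + \<bar>x\<bar> + \<bar>\<sigma>\<bar>) * (\<bar>p\<bar> + \<bar>q\<bar>)"
    by (simp add: algebra_simps)
  also have "\<dots> \<le> (1 + \<bar>x\<bar> + \<bar>\<sigma>\<bar>) * (1 + \<bar>x\<bar> + \<bar>\<sigma>\<bar>) ^ n"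
    using Suc.IH by (intro mult_left_mono) (simp_all add: p_def q_def)
  finally show ?case by (simp add: p_def q_def)
qed simp

lemma summable_quad_pow:
  "summable (\<lambda>n. fst (quad_pow x \<sigma> n) / fact n)" "summable (\<lambda>n. snd (quad_pow x \<sigma> n) / fact n)"
proof -
  have bound: "\<bar>fst (quad_pow x \<sigma> n)\<bar> / fact n \<le> inverse (fact n) * (1 + \<bar>x\<bar> + \<bar>\<sigma>\<bar>) ^ n"
    "\<bar>snd (quad_pow x \<sigma> n)\<bar> / fact n \<le> inverse (fact n) * (1 + \<bar>x\<bar> + \<bar>\<sigma>\<bar>) ^ n" for n
    using quad_pow_bound [of x \<sigma> n]
    by (simp_all add: divide_inverse mult.commute mult_left_mono)
  show "summable (\<lambda>n. fst (quad_pow x \<sigma> n) / fact n)" "summable (\<lambda>n. snd (quad_pow x \<sigma> n) / fact n)"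
    by (rule summable_comparison_test' [OF summable_exp [of "1 + \<bar>x\<bar> + \<bar>\<sigma>\<bar>"]], use bound in simp)+
qed

lemma quad_pow_nilpotent: "snd (quad_pow x 0 (Suc n)) = of_nat (Suc n) * x ^ n"
proof -
  have "fst (quad_pow x 0 n) = x ^ n \<and> snd (quad_pow x 0 (Suc n)) = of_nat (Suc n) * x ^ n"
    by (induction n) (auto simp: algebra_simps)
  then show ?thesis ..
qed

text \<open>When \<open>\<sigma> = 0\<close> the two square roots of \<open>\<sigma>\<close> coincide, so the coefficient of \<open>M\<close> is
  recorded separately.\<close>

lemma mexp_scalar_plus:
  assumes "M ** M = \<sigma> *\<^sub>R mat 1"
  obtains P Q where "mexp (x *\<^sub>R mat 1 + M) = P *\<^sub>R mat 1 + Q *\<^sub>R M"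
    and "\<And>\<omega>. \<omega>\<^sup>2 = complex_of_real \<sigma> \<Longrightarrow> exp (of_real x + \<omega>) = of_real P + of_real Q * \<omega>"
    and "\<sigma> = 0 \<Longrightarrow> Q = exp x"
proof
  define p q where "p = (\<lambda>n. fst (quad_pow x \<sigma> n) / fact n)"
    and "q = (\<lambda>n. snd (quad_pow x \<sigma> n) / fact n)"
  have p: "p sums suminf p" and q: "q sums suminf q"
    using summable_quad_pow by (simp_all add: p_def q_def summable_sums)
  have "(\<lambda>n. (1 / fact n) *\<^sub>R mpow (x *\<^sub>R mat 1 + M) n) = (\<lambda>n. p n *\<^sub>R mat 1 + q n *\<^sub>R M)"
    by (simp add: mpow_scalar_plus [OF assms] p_def q_def scaleR_add_right divide_inverse mult.commute)
  moreover have "(\<lambda>n. p n *\<^sub>R mat 1 + q n *\<^sub>R M) sums (suminf p *\<^sub>R mat 1 + suminf q *\<^sub>R M)"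
    by (intro sums_add sums_scaleR_left p q)
  ultimately show "mexp (x *\<^sub>R mat 1 + M) = suminf p *\<^sub>R mat 1 + suminf q *\<^sub>R M"
    by (simp add: mexp_def sums_iff)
  show "exp (of_real x + \<omega>) = of_real (suminf p) + of_real (suminf q) * \<omega>"
    if "\<omega>\<^sup>2 = complex_of_real \<sigma>" for \<omega>
  proof -
    have "(\<lambda>n. (of_real x + \<omega>) ^ n /\<^sub>R fact n) = (\<lambda>n. of_real (p n) + of_real (q n) * \<omega>)"
      unfolding power_quad_pow [OF that]
      by (simp add: p_def q_def scaleR_conv_of_real divide_inverse algebra_simps)
    moreover have "(\<lambda>n. of_real (p n) + of_real (q n) * \<omega>) sums (of_real (suminf p) + of_real (suminf q) * \<omega>)"
      by (intro sums_add sums_mult2 sums_of_real p q)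
    ultimately show ?thesis
      using exp_converges [of "of_real x + \<omega>"] sums_unique2 by metis
  qed
  show "suminf q = exp x" if "\<sigma> = 0"
  proof -
    have "q (Suc n) = x ^ n / fact n" for n
      using that by (simp add: q_def quad_pow_nilpotent del: quad_pow.simps(2) of_nat_Suc)
    then have "(\<lambda>n. q (Suc n)) sums exp x"
      using exp_converges [of x] by (simp add: divide_inverse mult.commute)
    then have "q sums (exp x + q 0)"
      by (simp only: sums_Suc_iff)
    then show ?thesis
      using q by (simp add: q_def sums_iff)
  qed
qed

text \<open>If \<open>A = a Id + N\<close> with \<open>N\<^sup>2 = s Id\<close>, then \<open>det (Id + t (A - Id)) = seg_det a s t\<close> and
  \<open>(A - Id) (Id + t (A - Id))\<^sup>-\<^sup>1 = log_alpha_density a s t Id + log_beta_density a s t N\<close>;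
  integrating over \<open>t \<in> [0,1]\<close> yields \<open>log A\<close>. The recurring hypothesis
  \<open>0 \<le> s \<Longrightarrow> sqrt s < a\<close> says that the eigenvalues \<open>a \<plusminus> \<surd>s\<close> of \<open>A\<close> avoid \<open>(-\<infinity>, 0]\<close>.\<close>

definition seg_det :: "real \<Rightarrow> real \<Rightarrow> real \<Rightarrow> real" where
  "seg_det a s t = (1 + t * (a - 1))\<^sup>2 - t\<^sup>2 * s"

definition log_alpha_density :: "real \<Rightarrow> real \<Rightarrow> real \<Rightarrow> real" where
  "log_alpha_density a s t = ((a - 1) * (1 + t * (a - 1)) - t * s) / seg_det a s t"

definition log_beta_density :: "real \<Rightarrow> real \<Rightarrow> real \<Rightarrow> real" where
  "log_beta_density a s t = 1 / seg_det a s t"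

definition log_alpha :: "real \<Rightarrow> real \<Rightarrow> real" where
  "log_alpha a s = integral {0..1} (log_alpha_density a s)"

definition log_beta :: "real \<Rightarrow> real \<Rightarrow> real" where
  "log_beta a s = integral {0..1} (log_beta_density a s)"

lemma seg_det_pos:
  assumes adm: "0 \<le> s \<Longrightarrow> sqrt s < a" and t: "t \<in> {0..1}"
  shows "0 < seg_det a s t"
proof (cases "0 \<le> s")
  case True
  have comb: "0 < (1 - t) + t * c" if "0 < c" for c
    using that t by (cases "t = 1") (auto intro: add_pos_nonneg)
  have "0 < (1 - t) + t * (a - sqrt s)" "0 < (1 - t) + t * (a + sqrt s)"
    using adm [OF True] real_sqrt_ge_zero [OF True] by (intro comb; linarith)+
  moreover have "seg_det a s t = ((1 - t) + t * (a - sqrt s)) * ((1 - t) + t * (a + sqrt s))"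
    using True by (simp add: seg_det_def power2_eq_square algebra_simps)
  ultimately show ?thesis by simp
next
  case False
  have "t\<^sup>2 * s < 0 \<or> t = 0"
    using False by (auto simp: mult_pos_neg)
  then show ?thesis
    unfolding seg_det_def using zero_le_power2 [of "1 + t * (a - 1)"] by (elim disjE) (linarith, simp)
qed

lemma plus_sqrt_notin_nonpos_Reals:
  assumes adm: "0 \<le> s \<Longrightarrow> sqrt s < a" and e: "e\<^sup>2 = complex_of_real s"
  shows "of_real a + e \<notin> \<real>\<^sub>\<le>\<^sub>0"
proof (cases "0 \<le> s")
  case True
  then have "e\<^sup>2 = (of_real (sqrt s))\<^sup>2"
    by (simp add: e flip: of_real_power)
  then have "e = of_real (sqrt s) \<or> e = - of_real (sqrt s)"
    by (simp add: power2_eq_iff)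
  moreover have "0 < a - sqrt s" "0 < a + sqrt s"
    using adm [OF True] real_sqrt_ge_zero [OF True] by linarith+
  ultimately show ?thesis
    by (auto simp: complex_nonpos_Reals_iff)
next
  case False
  have "Im e \<noteq> 0"
  proof
    assume "Im e = 0"
    then have "complex_of_real s = of_real ((Re e)\<^sup>2)"
      using e by (simp add: complex_eq_iff power2_eq_square)
    with False show False
      by (simp only: of_real_eq_iff) simp
  qed
  then show ?thesis
    by (simp add: complex_nonpos_Reals_iff)
qed

lemma segment_notin_nonpos_Reals:
  fixes l :: complex
  assumes l: "l \<notin> \<real>\<^sub>\<le>\<^sub>0" and t: "t \<in> {0..1}"
  shows "1 + of_real t * (l - 1) \<notin> \<real>\<^sub>\<le>\<^sub>0"
proof
  assume "1 + of_real t * (l - 1) \<in> \<real>\<^sub>\<le>\<^sub>0"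
  then have im: "t * Im l = 0" and re: "(1 - t) + t * Re l \<le> 0"
    by (auto simp: complex_nonpos_Reals_iff algebra_simps)
  show False
  proof (cases "t = 0")
    case False
    then have "0 < Re l"
      using im l by (auto simp: complex_nonpos_Reals_iff)
    then have "0 < t * Re l"
      using False t by simp
    with re t show False
      by simp
  qed (use re in simp)
qed

lemma has_integral_Ln:
  assumes l: "l \<notin> \<real>\<^sub>\<le>\<^sub>0"
  shows "((\<lambda>t. (l - 1) / (1 + of_real t * (l - 1))) has_integral Ln l) {0..1}"
proof -
  have "((\<lambda>t. Ln (1 + of_real t * (l - 1))) has_vector_derivative
          inverse (1 + of_real t * (l - 1)) * (l - 1)) (at t within {0..1})"
    if t: "t \<in> {0..1}" for t
    by (rule has_vector_derivative_real_field, rule DERIV_chain2 [where g = "\<lambda>z. 1 + z * (l - 1)",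
          OF has_field_derivative_Ln [OF segment_notin_nonpos_Reals [OF l t]]])
       (auto intro!: derivative_eq_intros)
  then have "((\<lambda>t. inverse (1 + of_real t * (l - 1)) * (l - 1)) has_integral
      Ln (1 + of_real 1 * (l - 1)) - Ln (1 + of_real 0 * (l - 1))) {0..1}"
    by (intro fundamental_theorem_of_calculus) auto
  then show ?thesis
    by (simp add: divide_inverse mult.commute)
qed

lemma integrable_log_densities:
  assumes adm: "0 \<le> s \<Longrightarrow> sqrt s < a"
  shows "log_alpha_density a s integrable_on {0..1}" "log_beta_density a s integrable_on {0..1}"
proof -
  have "continuous_on {0..1} (seg_det a s)"
    unfolding seg_det_def by (intro continuous_intros)
  moreover have "\<forall>t \<in> {0..1}. seg_det a s t \<noteq> 0"
    using seg_det_pos [OF adm] by fastforce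
  ultimately have "continuous_on {0..1} (log_alpha_density a s)" "continuous_on {0..1} (log_beta_density a s)"
    unfolding log_alpha_density_def log_beta_density_def by (intro continuous_intros; simp)+
  then show "log_alpha_density a s integrable_on {0..1}" "log_beta_density a s integrable_on {0..1}"
    by (auto intro: integrable_continuous_interval)
qed

lemma log_density_split:
  assumes adm: "0 \<le> s \<Longrightarrow> sqrt s < a" and e: "e\<^sup>2 = complex_of_real s" and t: "t \<in> {0..1}"
  shows "(of_real a + e - 1) / (1 + of_real t * (of_real a + e - 1))
    = of_real (log_alpha_density a s t) + of_real (log_beta_density a s t) * e"
proof -
  define u v where "u = 1 + of_real t * (of_real a + e - 1)" and "v = 1 + of_real t * (of_real a - e - 1)"
  define N where "N = (a - 1) * (1 + t * (a - 1)) - t * s"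
  have "u * v = (1 + of_real t * (of_real a - 1))\<^sup>2 - (of_real t)\<^sup>2 * e\<^sup>2"
    by (simp add: u_def v_def power2_eq_square algebra_simps)
  then have D: "of_real (seg_det a s t) = u * v"
    by (simp add: e seg_det_def)
  have "(of_real a + e - 1) * v = (of_real a - 1) * (1 + of_real t * (of_real a - 1)) - of_real t * e\<^sup>2 + e"
    by (simp add: v_def power2_eq_square algebra_simps)
  then have Nv: "(of_real a + e - 1) * v = of_real N + e"
    by (simp add: e N_def)
  have "v \<noteq> 0"
    using seg_det_pos [OF adm t] D by auto
  have "of_real (log_alpha_density a s t) + of_real (log_beta_density a s t) * e
      = (of_real N + e) / of_real (seg_det a s t)"
    by (simp add: log_alpha_density_def log_beta_density_def N_def add_divide_distrib)
  also have "\<dots> = (of_real a + e - 1) * v / (u * v)"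
    by (simp only: D Nv)
  also have "\<dots> = (of_real a + e - 1) / u"
    using \<open>v \<noteq> 0\<close> by simp
  finally show ?thesis
    by (simp add: u_def)
qed

lemma Ln_plus_sqrt:
  assumes adm: "0 \<le> s \<Longrightarrow> sqrt s < a" and e: "e\<^sup>2 = complex_of_real s"
  shows "Ln (of_real a + e) = of_real (log_alpha a s) + of_real (log_beta a s) * e"
proof (rule has_integral_unique)
  show "((\<lambda>t. of_real (log_alpha_density a s t) + of_real (log_beta_density a s t) * e)
      has_integral Ln (of_real a + e)) {0..1}"
    using log_density_split [OF adm e]
    by (intro has_integral_eq [OF _ has_integral_Ln [OF plus_sqrt_notin_nonpos_Reals [OF adm e]]])
       simp
  show "((\<lambda>t. of_real (log_alpha_density a s t) + of_real (log_beta_density a s t) * e)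
      has_integral (of_real (log_alpha a s) + of_real (log_beta a s) * e)) {0..1}"
    unfolding log_alpha_def log_beta_def
    by (intro has_integral_add has_integral_mult_left has_integral_of_real integrable_integral
        integrable_log_densities [OF adm])
qed

lemma log_beta_nonneg:
  assumes adm: "0 \<le> s \<Longrightarrow> sqrt s < a"
  shows "0 \<le> log_beta a s"
  unfolding log_beta_def
  using integrable_log_densities(2) [OF adm] seg_det_pos [OF adm]
  by (intro integral_nonneg) (auto simp: log_beta_density_def less_imp_le)

lemma log_beta_zero:
  assumes "0 < a"
  shows "log_beta a 0 = 1 / a"
proof -
  have "((\<lambda>t. t / (1 + t * (a - 1))) has_vector_derivative log_beta_density a 0 t)
      (at t within {0..1})" if t: "t \<in> {0..1}" for t
  proof -
    have "0 < seg_det a 0 t"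
      using seg_det_pos [of 0 a] assms t by simp
    then have "1 + t * (a - 1) \<noteq> 0"
      by (auto simp: seg_det_def)
    then show ?thesis
      unfolding has_real_derivative_iff_has_vector_derivative [symmetric]
      by (auto intro!: derivative_eq_intros
          simp: log_beta_density_def seg_det_def field_simps power2_eq_square)
  qed
  then have "(log_beta_density a 0 has_integral 1 / (1 + 1 * (a - 1)) - 0 / (1 + 0 * (a - 1))) {0..1}"
    by (intro fundamental_theorem_of_calculus) auto
  then show ?thesis
    by (simp add: log_beta_def integral_unique)
qed

lemma log_alpha_zero:
  assumes "0 < a"
  shows "log_alpha a 0 = ln a"
  using Ln_plus_sqrt [of 0 a 0] assms by (simp add: Ln_of_real)

lemma exp_log_coeffs:
  assumes adm: "0 \<le> s \<Longrightarrow> sqrt s < a" and e: "e\<^sup>2 = complex_of_real s"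
  shows "exp (of_real (log_alpha a s) + of_real (log_beta a s) * e) = of_real a + e"
  using plus_sqrt_notin_nonpos_Reals [OF adm e]
  by (auto simp: Ln_plus_sqrt [OF adm e, symmetric] intro!: exp_Ln)

lemma Im_log_coeffs:
  assumes adm: "0 \<le> s \<Longrightarrow> sqrt s < a" and e: "e\<^sup>2 = complex_of_real s"
  shows "\<bar>Im (of_real (log_alpha a s) + of_real (log_beta a s) * e)\<bar> < pi"
  using plus_sqrt_notin_nonpos_Reals [OF adm e] mpi_less_Im_Ln [of "of_real a + e"] Im_Ln_less_pi
  by (force simp: Ln_plus_sqrt [OF adm e, symmetric] abs_less_iff)

lemma mexp_log_coeffs:
  assumes N: "N ** N = s *\<^sub>R mat 1" and adm: "0 \<le> s \<Longrightarrow> sqrt s < a"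
  shows "mexp (log_alpha a s *\<^sub>R mat 1 + log_beta a s *\<^sub>R N) = a *\<^sub>R mat 1 + N"
proof -
  define \<alpha> \<beta> where "\<alpha> = log_alpha a s" and "\<beta> = log_beta a s"
  have sq: "(\<beta> *\<^sub>R N) ** (\<beta> *\<^sub>R N) = (\<beta>\<^sup>2 * s) *\<^sub>R mat 1"
    using N by (simp add: matrix_scalar_ac scalar_matrix_assoc [symmetric] power2_eq_square)
  obtain P Q where mexp: "mexp (\<alpha> *\<^sub>R mat 1 + \<beta> *\<^sub>R N) = P *\<^sub>R mat 1 + Q *\<^sub>R (\<beta> *\<^sub>R N)"
    and exp: "\<And>\<omega>. \<omega>\<^sup>2 = complex_of_real (\<beta>\<^sup>2 * s) \<Longrightarrow> exp (of_real \<alpha> + \<omega>) = of_real P + of_real Q * \<omega>"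
    and nil: "\<beta>\<^sup>2 * s = 0 \<Longrightarrow> Q = exp \<alpha>"
    using mexp_scalar_plus [OF sq] by blast
  have PQ: "of_real P + of_real (Q * \<beta>) * e = of_real a + e" if e: "e\<^sup>2 = complex_of_real s" for e
    using exp [of "of_real \<beta> * e"] exp_log_coeffs [OF adm e]
    by (simp add: \<alpha>_def \<beta>_def e power_mult_distrib mult.assoc)
  define e where "e = csqrt (of_real s)"
  have e: "e\<^sup>2 = complex_of_real s" "(- e)\<^sup>2 = complex_of_real s"
    by (simp_all add: e_def)
  have "complex_of_real P = of_real a"
    using PQ [OF e(1)] PQ [OF e(2)] by algebra
  then have "P = a"
    by simp
  then have Qe: "of_real (Q * \<beta>) * e = e"
    using PQ [OF e(1)] by simp
  have "Q * \<beta> = 1"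
  proof (cases "s = 0")
    case True
    then have "0 < a"
      using adm by simp
    then show ?thesis
      using True nil by (simp add: \<alpha>_def \<beta>_def log_alpha_zero log_beta_zero)
  next
    case False
    then show ?thesis
      using Qe by (simp add: e_def del: of_real_mult)
  qed
  then show ?thesis
    by (simp add: mexp \<open>P = a\<close> flip: \<alpha>_def \<beta>_def)
qed

lemma Im_eigenvalues2_log_coeffs:
  fixes A :: rmat2
  defines "a \<equiv> coef_a A" and "s \<equiv> discr A"
  assumes adm: "0 \<le> s \<Longrightarrow> sqrt s < a"
  shows "\<forall>z \<in> eigenvalues2 (log_alpha a s *\<^sub>R mat 1 + log_beta a s *\<^sub>R trace_free A). \<bar>Im z\<bar> < pi"
proof
  fix z
  assume "z \<in> eigenvalues2 (log_alpha a s *\<^sub>R mat 1 + log_beta a s *\<^sub>R trace_free A)"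
  then have "(z - of_real (log_alpha a s))\<^sup>2 = (of_real (log_beta a s) * csqrt (of_real s))\<^sup>2"
    by (simp add: eigenvalues2_iff coef_scalar_plus_trace_free discr_scalar_plus_trace_free
        power_mult_distrib s_def)
  then have "z - of_real (log_alpha a s) = of_real (log_beta a s) * csqrt (of_real s) \<or>
      z - of_real (log_alpha a s) = of_real (log_beta a s) * (- csqrt (of_real s))"
    by (simp add: power2_eq_iff)
  then show "\<bar>Im z\<bar> < pi"
    using Im_log_coeffs [OF adm, of "csqrt (of_real s)"] Im_log_coeffs [OF adm, of "- csqrt (of_real s)"]
    by (auto simp: diff_eq_eq add.commute)
qed

lemma trace_free_mexp:
  obtains Q where "trace_free (mexp L) = Q *\<^sub>R trace_free L" and "discr (mexp L) = Q\<^sup>2 * discr L"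
    and "\<And>\<omega>. \<omega>\<^sup>2 = complex_of_real (discr L) \<Longrightarrow>
      exp (of_real (coef_a L) + \<omega>) = of_real (coef_a (mexp L)) + of_real Q * \<omega>"
    and "discr L = 0 \<Longrightarrow> Q = exp (coef_a L)"
proof -
  define x M where "x = coef_a L" and "M = trace_free L"
  have L: "L = x *\<^sub>R mat 1 + M"
    by (simp add: x_def M_def trace_free_def)
  obtain P Q where mexp: "mexp (x *\<^sub>R mat 1 + M) = P *\<^sub>R mat 1 + Q *\<^sub>R M"
    and "\<And>\<omega>. \<omega>\<^sup>2 = complex_of_real (discr L) \<Longrightarrow> exp (of_real x + \<omega>) = of_real P + of_real Q * \<omega>"
    and "discr L = 0 \<Longrightarrow> Q = exp x"
    using mexp_scalar_plus [OF trace_free_sq] unfolding M_def by blast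
  moreover have "mexp L = P *\<^sub>R mat 1 + Q *\<^sub>R M"
    using mexp by (simp only: L)
  ultimately show ?thesis
    using that [of Q] by (simp add: x_def M_def coef_scalar_plus_trace_free trace_free_scalar_plus_trace_free
        discr_scalar_plus_trace_free)
qed

lemma principal_log_unique:
  fixes A L :: rmat2
  defines "a \<equiv> coef_a A" and "s \<equiv> discr A"
  assumes adm: "0 \<le> s \<Longrightarrow> sqrt s < a"
    and exp_L: "mexp L = A" and strip: "\<forall>z \<in> eigenvalues2 L. \<bar>Im z\<bar> < pi"
  shows "L = log_alpha a s *\<^sub>R mat 1 + log_beta a s *\<^sub>R trace_free A"
proof -
  define x \<sigma> where "x = coef_a L" and "\<sigma> = discr L"
  obtain Q where N: "trace_free A = Q *\<^sub>R trace_free L" and "s = Q\<^sup>2 * \<sigma>"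
    and exp: "\<And>\<omega>. \<omega>\<^sup>2 = complex_of_real \<sigma> \<Longrightarrow> exp (of_real x + \<omega>) = of_real a + of_real Q * \<omega>"
    and nil: "\<sigma> = 0 \<Longrightarrow> Q = exp x"
    using trace_free_mexp [of L] unfolding exp_L x_def \<sigma>_def a_def s_def by metis
  \<comment> \<open>\<open>x \<plusminus> \<omega>\<close> are eigenvalues of \<open>L\<close>, so lying in the strip they are the principal
    logarithms of the eigenvalues \<open>a \<plusminus> Q \<omega>\<close> of \<open>A\<close>\<close>
  have log: "of_real x + \<omega> = of_real (log_alpha a s) + of_real (log_beta a s) * (of_real Q * \<omega>)"
    if \<omega>: "\<omega>\<^sup>2 = complex_of_real \<sigma>" for \<omega>
  proof -
    have "of_real x + \<omega> \<in> eigenvalues2 L"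
      by (simp add: eigenvalues2_iff \<omega> flip: x_def \<sigma>_def)
    then have "Ln (of_real a + of_real Q * \<omega>) = of_real x + \<omega>"
      using strip exp [OF \<omega>] by (intro Ln_unique) (auto simp: abs_less_iff)
    moreover have "(of_real Q * \<omega>)\<^sup>2 = complex_of_real s"
      by (simp add: \<omega> \<open>s = Q\<^sup>2 * \<sigma>\<close> power_mult_distrib)
    ultimately show ?thesis
      using Ln_plus_sqrt [OF adm] by simp
  qed
  have "x = log_alpha a s"
    using log [of "csqrt (of_real \<sigma>)"] log [of "- csqrt (of_real \<sigma>)"] by (simp add: complex_eq_iff)
  moreover have "log_beta a s * Q = 1"
  proof (cases "\<sigma> = 0")
    case True
    then have "a = exp x" and "Q = exp x"
      using exp [of 0] nil by (simp_all add: exp_of_real)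
    then show ?thesis
      using True \<open>s = Q\<^sup>2 * \<sigma>\<close> log_beta_zero [of a] by simp
  next
    case False
    have "of_real (log_beta a s * Q) * csqrt (of_real \<sigma>) = csqrt (of_real \<sigma>)"
      using log [of "csqrt (of_real \<sigma>)"] \<open>x = log_alpha a s\<close> by (simp add: algebra_simps)
    with False show ?thesis
      by (simp del: of_real_mult)
  qed
  moreover have "L = x *\<^sub>R mat 1 + trace_free L"
    by (simp add: x_def trace_free_def)
  ultimately show ?thesis
    by (simp add: N)
qed

lemma sqrt_discr_less_coef_a:
  assumes "\<forall>z \<in> eigenvalues2 A. \<not> (Im z = 0 \<and> Re z \<le> 0)" and "0 \<le> discr A"
  shows "sqrt (discr A) < coef_a A"
proof -
  have "of_real (coef_a A - sqrt (discr A)) \<in> eigenvalues2 A"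
    using \<open>0 \<le> discr A\<close> by (simp add: eigenvalues2_iff flip: of_real_power)
  with assms(1) show ?thesis
    by fastforce
qed

lemma mlog_eq:
  assumes "\<forall>z \<in> eigenvalues2 A. \<not> (Im z = 0 \<and> Re z \<le> 0)"
  shows "mlog A = log_alpha (coef_a A) (discr A) *\<^sub>R mat 1 + log_beta (coef_a A) (discr A) *\<^sub>R trace_free A"
    (is "_ = ?L")
proof -
  have adm: "0 \<le> discr A \<Longrightarrow> sqrt (discr A) < coef_a A"
    using sqrt_discr_less_coef_a [OF assms] .
  have "coef_a A *\<^sub>R mat 1 + trace_free A = A"
    by (simp add: trace_free_def)
  then have "mexp ?L = A"
    using mexp_log_coeffs [OF trace_free_sq adm] by simp
  with Im_eigenvalues2_log_coeffs [OF adm] principal_log_unique [OF adm] show ?thesis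
    unfolding mlog_def by (intro the_equality) blast+
qed

definition complex_of_vec2 :: "real^2 \<Rightarrow> complex" where
  "complex_of_vec2 v = Complex (v$1) (v$2)"

lemma norm_complex_of_vec2: "cmod (complex_of_vec2 v) = norm v"
  by (simp add: complex_of_vec2_def norm_vec_def L2_set_def sum_2 cmod_def)

lemma complex_of_vec2_vector: "complex_of_vec2 (vector [Re \<zeta>, Im \<zeta>]) = \<zeta>"
  by (simp add: complex_of_vec2_def complex_eq_iff)

lemma complex_of_vec2_mult:
  "complex_of_vec2 (X *v v) =
    Complex (coef_a X) (coef_b X) * complex_of_vec2 v + Complex (coef_c X) (coef_d X) * cnj (complex_of_vec2 v)"
  by (simp add: complex_of_vec2_def matrix_vector_mult_def sum_2 coef_a_def coef_b_def coef_c_def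
      coef_d_def complex_eq_iff field_simps)

lemma norm_conj_linear_attained:
  fixes z w :: complex
  obtains \<zeta> where "\<zeta> \<noteq> 0" "cmod (z * \<zeta> + w * cnj \<zeta>) = (cmod z + cmod w) * cmod \<zeta>"
proof (cases "z = 0 \<or> w = 0")
  case True
  then show ?thesis
    using that [of 1] by auto
next
  case False
  define \<zeta> where "\<zeta> = csqrt (w * cnj z)"
  have \<zeta>2: "\<zeta>\<^sup>2 = w * cnj z"
    by (simp add: \<zeta>_def)
  have norm_\<zeta>: "(cmod \<zeta>)\<^sup>2 = cmod z * cmod w"
    using arg_cong [OF \<zeta>2, of cmod] by (simp add: norm_power norm_mult)
  have "\<zeta> \<noteq> 0"
    using False \<zeta>2 by auto
  have zz: "\<zeta> * cnj \<zeta> = of_real (cmod z * cmod w)"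
    using complex_norm_square [of \<zeta>] norm_\<zeta> by simp
  have "w * cnj (\<zeta>\<^sup>2) = (w * cnj w) * z"
    by (simp add: \<zeta>2 mult.assoc)
  then have ww: "w * cnj (\<zeta>\<^sup>2) = of_real ((cmod w)\<^sup>2) * z"
    by (simp only: complex_norm_square)
  have "cnj \<zeta> * (z * \<zeta> + w * cnj \<zeta>) = z * (\<zeta> * cnj \<zeta>) + w * cnj (\<zeta>\<^sup>2)"
    by (simp add: power2_eq_square algebra_simps)
  also have "\<dots> = z * of_real (cmod z * cmod w + (cmod w)\<^sup>2)"
    by (simp only: zz ww of_real_add distrib_left mult.commute)
  finally have "cmod (cnj \<zeta> * (z * \<zeta> + w * cnj \<zeta>)) = cmod (z * of_real (cmod z * cmod w + (cmod w)\<^sup>2))"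
    by (rule arg_cong)
  then have "cmod \<zeta> * cmod (z * \<zeta> + w * cnj \<zeta>) = cmod z * (cmod z * cmod w + (cmod w)\<^sup>2)"
    by (simp only: norm_mult complex_mod_cnj norm_of_real abs_of_nonneg [OF add_nonneg_nonneg [OF
          mult_nonneg_nonneg [OF norm_ge_zero norm_ge_zero] zero_le_power2]])
  also have "\<dots> = cmod \<zeta> * ((cmod z + cmod w) * cmod \<zeta>)"
    using norm_\<zeta> by algebra
  finally show ?thesis
    using that \<open>\<zeta> \<noteq> 0\<close> by simp
qed

lemma opnorm2_eq:
  "opnorm2 X = cmod (Complex (coef_a X) (coef_b X)) + cmod (Complex (coef_c X) (coef_d X))"
proof (rule antisym)
  define z w where "z = Complex (coef_a X) (coef_b X)" and "w = Complex (coef_c X) (coef_d X)"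
  have "norm (X *v v) \<le> (cmod z + cmod w) * norm v" for v
  proof -
    have "norm (X *v v) = cmod (z * complex_of_vec2 v + w * cnj (complex_of_vec2 v))"
      by (simp add: complex_of_vec2_mult z_def w_def flip: norm_complex_of_vec2)
    also have "\<dots> \<le> cmod (z * complex_of_vec2 v) + cmod (w * cnj (complex_of_vec2 v))"
      by (rule norm_triangle_ineq)
    also have "\<dots> = (cmod z + cmod w) * norm v"
      by (simp add: norm_mult norm_complex_of_vec2 algebra_simps)
    finally show ?thesis .
  qed
  then show "opnorm2 X \<le> cmod z + cmod w"
    unfolding opnorm2_def by (rule onorm_le)
  obtain \<zeta> where "\<zeta> \<noteq> 0" and \<zeta>: "cmod (z * \<zeta> + w * cnj \<zeta>) = (cmod z + cmod w) * cmod \<zeta>"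
    by (rule norm_conj_linear_attained)
  define v :: "real^2" where "v = vector [Re \<zeta>, Im \<zeta>]"
  have "(cmod z + cmod w) * norm v = norm (X *v v)"
    using \<zeta> by (simp add: v_def complex_of_vec2_mult complex_of_vec2_vector z_def w_def
        flip: norm_complex_of_vec2)
  also have "\<dots> \<le> opnorm2 X * norm v"
    unfolding opnorm2_def by (rule onorm) simp
  finally show "cmod z + cmod w \<le> opnorm2 X"
    using \<open>\<zeta> \<noteq> 0\<close> by (simp add: v_def complex_of_vec2_vector flip: norm_complex_of_vec2)
qed

lemma det_eq_coef:
  "det X = (cmod (Complex (coef_a X) (coef_b X)))\<^sup>2 - (cmod (Complex (coef_c X) (coef_d X)))\<^sup>2"
  unfolding cmod_power2 complex.sel
  by (simp add: det_2 coef_a_def coef_b_def coef_c_def coef_d_def power2_eq_square field_simps)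

lemma floor2_eq:
  "floor2 X = cmod (Complex (coef_a X) (coef_b X)) - cmod (Complex (coef_c X) (coef_d X))"
proof (cases "X = 0")
  case True
  then show ?thesis
    by (simp add: floor2_def coef_a_def coef_b_def coef_c_def coef_d_def)
next
  case False
  define p q where "p = cmod (Complex (coef_a X) (coef_b X))" and "q = cmod (Complex (coef_c X) (coef_d X))"
  have "p + q \<noteq> 0"
  proof
    assume "p + q = 0"
    then have "coef_a X = 0" "coef_b X = 0" "coef_c X = 0" "coef_d X = 0"
      by (auto simp: p_def q_def add_nonneg_eq_0_iff complex_eq_iff)
    then show False
      using False by (auto simp: rmat2_eq_iff coef_a_def coef_b_def coef_c_def coef_d_def)
  qed
  then have "floor2 X = (p\<^sup>2 - q\<^sup>2) / (p + q)"
    using False by (simp add: floor2_def opnorm2_eq det_eq_coef p_def q_def)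
  also have "\<dots> = p - q"
    using \<open>p + q \<noteq> 0\<close> by (simp add: power2_eq_square field_simps)
  finally show ?thesis
    by (simp add: p_def q_def)
qed

definition pd_center :: "rmat2 \<Rightarrow> complex" where
  "pd_center X = Complex (coef_a X) \<bar>coef_b X\<bar>"

definition pd_radius :: "rmat2 \<Rightarrow> real" where
  "pd_radius X = sqrt ((coef_c X)\<^sup>2 + (coef_d X)\<^sup>2)"

lemma pd_radius_nonneg: "0 \<le> pd_radius X"
  by (simp add: pd_radius_def)

lemma PD_eq_cball: "PD X = cball (pd_center X) (pd_radius X)"
  by (simp add: PD_def pd_center_def pd_radius_def)

lemma opnorm2_eq_pd: "opnorm2 X = cmod (pd_center X) + pd_radius X"
  by (simp add: opnorm2_eq pd_center_def pd_radius_def cmod_def)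

lemma floor2_eq_pd: "floor2 X = cmod (pd_center X) - pd_radius X"
  by (simp add: floor2_eq pd_center_def pd_radius_def cmod_def)

lemma discr_eq_pd: "discr X = (pd_radius X)\<^sup>2 - \<bar>coef_b X\<bar>\<^sup>2"
  by (simp add: discr_def pd_center_def pd_radius_def)

lemma pd_scalar_plus_trace_free:
  assumes "0 \<le> y"
  shows "pd_center (x *\<^sub>R mat 1 + y *\<^sub>R trace_free X) = Complex x (y * \<bar>coef_b X\<bar>)"
    and "pd_radius (x *\<^sub>R mat 1 + y *\<^sub>R trace_free X) = y * pd_radius X"
  using assms
  by (simp_all add: pd_center_def pd_radius_def coef_scalar_plus_trace_free abs_mult
      power_mult_distrib real_sqrt_mult flip: distrib_left)

text \<open>\<open>norm c\<^sup>2 - R\<^sup>2\<close> is the power of the origin with respect to the sphere of radius \<open>R\<close>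
  about \<open>c\<close>.\<close>

lemma radius_mul_power_le:
  fixes c1 c2 :: "'a::real_normed_vector"
  assumes "dist c1 c2 + R1 \<le> R2" and "0 \<le> R1"
  shows "R1 * ((norm c2)\<^sup>2 - R2\<^sup>2) \<le> R2 * ((norm c1)\<^sup>2 - R1\<^sup>2)"
proof -
  define d where "d = R2 - R1"
  have "0 \<le> d" and "norm c2 \<le> norm c1 + d"
    using assms(1) norm_triangle_sub [of c2 c1] zero_le_dist [of c1 c2]
    unfolding d_def dist_norm norm_minus_commute [of c2] by linarith+
  then have "R1 * (norm c2)\<^sup>2 \<le> R1 * (norm c1 + d)\<^sup>2"
    using assms(2) by (intro mult_left_mono power_mono) simp_all
  moreover have "R2 * ((norm c1)\<^sup>2 - R1\<^sup>2) - R1 * ((norm c1 + d)\<^sup>2 - R2\<^sup>2) = d * (norm c1 - R1)\<^sup>2"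
    by (simp add: d_def power2_eq_square algebra_simps)
  moreover have "0 \<le> d * (norm c1 - R1)\<^sup>2"
    using \<open>0 \<le> d\<close> by simp
  ultimately show ?thesis
    by (simp add: algebra_simps)
qed

lemma log_density_identity:
  fixes a1 B1 r1 a2 B2 r2 t :: real
  defines "P1 \<equiv> (1 + t * (a1 - 1))\<^sup>2 - t\<^sup>2 * (r1\<^sup>2 - B1\<^sup>2)"
    and "P2 \<equiv> (1 + t * (a2 - 1))\<^sup>2 - t\<^sup>2 * (r2\<^sup>2 - B2\<^sup>2)"
    and "N1 \<equiv> (a1 - 1) * (1 + t * (a1 - 1)) - t * (r1\<^sup>2 - B1\<^sup>2)"
    and "N2 \<equiv> (a2 - 1) * (1 + t * (a2 - 1)) - t * (r2\<^sup>2 - B2\<^sup>2)"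
  shows "(N1 * P2 - N2 * P1)\<^sup>2 + (B1 * P2 - B2 * P1)\<^sup>2 - (r2 * P1 - r1 * P2)\<^sup>2
    = P1 * P2 * ((a1 - a2)\<^sup>2 + (B1 - B2)\<^sup>2 - (r2 - r1)\<^sup>2)"
  unfolding P1_def P2_def N1_def N2_def by algebra

lemma radius_mul_seg_det_le:
  fixes a1 B1 r1 a2 B2 r2 t :: real
  assumes s1: "s1 = r1\<^sup>2 - B1\<^sup>2" and s2: "s2 = r2\<^sup>2 - B2\<^sup>2"
    and "0 \<le> r1" and incl: "dist (Complex a1 B1) (Complex a2 B2) + r1 \<le> r2" and t: "t \<in> {0..1}"
  shows "r1 * seg_det a2 s2 t \<le> r2 * seg_det a1 s1 t"
proof (cases "t = 0")
  case True
  have "r1 \<le> r2"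
    using incl zero_le_dist [of "Complex a1 B1" "Complex a2 B2"] by linarith
  with True show ?thesis
    by (simp add: seg_det_def)
next
  case False
  define u1 u2 where "u1 = Complex (1 + t * (a1 - 1)) (t * B1)" and "u2 = Complex (1 + t * (a2 - 1)) (t * B2)"
  have "dist u1 u2 = t * dist (Complex a1 B1) (Complex a2 B2)"
    using t by (simp add: u1_def u2_def dist_norm cmod_def power_mult_distrib real_sqrt_mult
        flip: distrib_left right_diff_distrib)
  then have "dist u1 u2 + t * r1 \<le> t * r2"
    using incl t by (simp add: mult_left_mono flip: distrib_left)
  then have "t * r1 * ((cmod u2)\<^sup>2 - (t * r2)\<^sup>2) \<le> t * r2 * ((cmod u1)\<^sup>2 - (t * r1)\<^sup>2)"
    using \<open>0 \<le> r1\<close> t by (intro radius_mul_power_le) simp_all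
  moreover have "seg_det a1 s1 t = (cmod u1)\<^sup>2 - (t * r1)\<^sup>2" "seg_det a2 s2 t = (cmod u2)\<^sup>2 - (t * r2)\<^sup>2"
    by (simp_all add: u1_def u2_def seg_det_def s1 s2 cmod_power2 algebra_simps)
  ultimately show ?thesis
    using False t by (simp add: mult.assoc)
qed

lemma log_densities_dist_le:
  fixes a1 B1 r1 a2 B2 r2 t :: real
  assumes s1: "s1 = r1\<^sup>2 - B1\<^sup>2" and s2: "s2 = r2\<^sup>2 - B2\<^sup>2"
    and adm1: "0 \<le> s1 \<Longrightarrow> sqrt s1 < a1" and adm2: "0 \<le> s2 \<Longrightarrow> sqrt s2 < a2"
    and "0 \<le> r1" and incl: "dist (Complex a1 B1) (Complex a2 B2) + r1 \<le> r2" and t: "t \<in> {0..1}"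
  shows "dist (Complex (log_alpha_density a1 s1 t) (B1 * log_beta_density a1 s1 t))
      (Complex (log_alpha_density a2 s2 t) (B2 * log_beta_density a2 s2 t))
    + r1 * log_beta_density a1 s1 t \<le> r2 * log_beta_density a2 s2 t"
proof -
  define P1 P2 where "P1 = seg_det a1 s1 t" and "P2 = seg_det a2 s2 t"
  define N1 N2 where "N1 = (a1 - 1) * (1 + t * (a1 - 1)) - t * s1"
    and "N2 = (a2 - 1) * (1 + t * (a2 - 1)) - t * s2"
  have "0 < P1" "0 < P2"
    using seg_det_pos [OF adm1 t] seg_det_pos [OF adm2 t] by (simp_all add: P1_def P2_def)
  have dist_sq: "(dist (Complex a1 B1) (Complex a2 B2))\<^sup>2 = (a1 - a2)\<^sup>2 + (B1 - B2)\<^sup>2"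
    by (simp add: dist_norm cmod_power2)
  have Z: "r1 * P2 \<le> r2 * P1"
    unfolding P1_def P2_def using s1 s2 \<open>0 \<le> r1\<close> incl t by (rule radius_mul_seg_det_le)
  have "(N1 * P2 - N2 * P1)\<^sup>2 + (B1 * P2 - B2 * P1)\<^sup>2 - (r2 * P1 - r1 * P2)\<^sup>2
      = P1 * P2 * ((a1 - a2)\<^sup>2 + (B1 - B2)\<^sup>2 - (r2 - r1)\<^sup>2)"
    unfolding P1_def P2_def N1_def N2_def seg_det_def s1 s2 by (rule log_density_identity)
  also have "\<dots> \<le> 0"
    using \<open>0 < P1\<close> \<open>0 < P2\<close> incl dist_sq zero_le_dist [of "Complex a1 B1" "Complex a2 B2"]
    by (intro mult_nonneg_nonpos) (simp_all add: power_mono flip: dist_sq)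
  finally have "cmod (Complex (N1 * P2 - N2 * P1) (B1 * P2 - B2 * P1)) \<le> sqrt ((r2 * P1 - r1 * P2)\<^sup>2)"
    unfolding cmod_def complex.sel by (intro real_sqrt_le_mono) simp
  then have "cmod (Complex (N1 * P2 - N2 * P1) (B1 * P2 - B2 * P1)) \<le> r2 * P1 - r1 * P2"
    using Z by simp
  moreover have "Complex (N1 / P1) (B1 * (1 / P1)) - Complex (N2 / P2) (B2 * (1 / P2))
      = inverse (P1 * P2) *\<^sub>R Complex (N1 * P2 - N2 * P1) (B1 * P2 - B2 * P1)"
    using \<open>0 < P1\<close> \<open>0 < P2\<close> by (simp add: complex_eq_iff field_simps)
  ultimately have "dist (Complex (N1 / P1) (B1 * (1 / P1))) (Complex (N2 / P2) (B2 * (1 / P2)))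
      \<le> inverse (P1 * P2) * (r2 * P1 - r1 * P2)"
    using \<open>0 < P1\<close> \<open>0 < P2\<close> by (simp add: dist_norm mult_left_mono del: inverse_mult_distrib)
  also have "\<dots> = r2 * (1 / P2) - r1 * (1 / P1)"
    using \<open>0 < P1\<close> \<open>0 < P2\<close> by (simp add: field_simps)
  finally show ?thesis
    by (simp add: log_alpha_density_def log_beta_density_def flip: P1_def P2_def N1_def N2_def)
qed

lemma has_integral_Complex:
  assumes "(f has_integral x) S" and "(g has_integral y) S"
  shows "((\<lambda>t. Complex (f t) (g t)) has_integral Complex x y) S"
  unfolding Complex_eq
  by (intro has_integral_add has_integral_mult_right has_integral_of_real assms)

lemma log_coeffs_dist_le:
  fixes a1 B1 r1 a2 B2 r2 :: real
  assumes s1: "s1 = r1\<^sup>2 - B1\<^sup>2" and s2: "s2 = r2\<^sup>2 - B2\<^sup>2"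
    and adm1: "0 \<le> s1 \<Longrightarrow> sqrt s1 < a1" and adm2: "0 \<le> s2 \<Longrightarrow> sqrt s2 < a2"
    and "0 \<le> r1" and incl: "dist (Complex a1 B1) (Complex a2 B2) + r1 \<le> r2"
  shows "dist (Complex (log_alpha a1 s1) (B1 * log_beta a1 s1)) (Complex (log_alpha a2 s2) (B2 * log_beta a2 s2))
    + r1 * log_beta a1 s1 \<le> r2 * log_beta a2 s2"
proof -
  define c where "c a B s t = Complex (log_alpha_density a s t) (B * log_beta_density a s t)" for a B s t
  have c: "(c a B s has_integral Complex (log_alpha a s) (B * log_beta a s)) {0..1}"
    if "0 \<le> s \<Longrightarrow> sqrt s < a" for a B s
    unfolding c_def log_alpha_def log_beta_def
    by (intro has_integral_Complex has_integral_mult_right integrable_integral integrable_log_densities that)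
  have \<rho>: "((\<lambda>t. r2 * log_beta_density a2 s2 t - r1 * log_beta_density a1 s1 t) has_integral
      r2 * log_beta a2 s2 - r1 * log_beta a1 s1) {0..1}"
    unfolding log_beta_def
    by (intro has_integral_diff has_integral_mult_right integrable_integral integrable_log_densities adm1 adm2)
  have "norm (integral {0..1} (\<lambda>t. c a1 B1 s1 t - c a2 B2 s2 t))
      \<le> integral {0..1} (\<lambda>t. r2 * log_beta_density a2 s2 t - r1 * log_beta_density a1 s1 t)"
    using has_integral_diff [OF c [OF adm1] c [OF adm2]] \<rho>
      log_densities_dist_le [OF s1 s2 adm1 adm2 \<open>0 \<le> r1\<close> incl]
    by (intro integral_norm_bound_integral) (auto simp: c_def dist_norm algebra_simps)
  then show ?thesis
    using integral_unique [OF has_integral_diff [OF c [OF adm1] c [OF adm2]]] integral_unique [OF \<rho>]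
    by (simp add: dist_norm algebra_simps)
qed

lemma PD_mlog_mono:
  assumes hyp1: "\<forall>z \<in> eigenvalues2 A1. \<not> (Im z = 0 \<and> Re z \<le> 0)"
    and hyp2: "\<forall>z \<in> eigenvalues2 A2. \<not> (Im z = 0 \<and> Re z \<le> 0)"
    and "PD A1 \<subseteq> PD A2"
  shows "PD (mlog A1) \<subseteq> PD (mlog A2)"
proof -
  have pd: "pd_center (mlog A) =
      Complex (log_alpha (coef_a A) (discr A)) (\<bar>coef_b A\<bar> * log_beta (coef_a A) (discr A))"
    "pd_radius (mlog A) = pd_radius A * log_beta (coef_a A) (discr A)"
    if "\<forall>z \<in> eigenvalues2 A. \<not> (Im z = 0 \<and> Re z \<le> 0)" for A
    using mlog_eq [OF that] pd_scalar_plus_trace_free log_beta_nonneg [OF sqrt_discr_less_coef_a [OF that]]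
    by (simp_all add: mult.commute)
  have "dist (Complex (coef_a A1) \<bar>coef_b A1\<bar>) (Complex (coef_a A2) \<bar>coef_b A2\<bar>) + pd_radius A1
      \<le> pd_radius A2"
    using \<open>PD A1 \<subseteq> PD A2\<close> pd_radius_nonneg [of A1]
    by (auto simp: PD_eq_cball cball_subset_cball_iff pd_center_def)
  then have "dist (pd_center (mlog A1)) (pd_center (mlog A2)) + pd_radius (mlog A1) \<le> pd_radius (mlog A2)"
    unfolding pd [OF hyp1] pd [OF hyp2]
    using log_coeffs_dist_le [OF discr_eq_pd discr_eq_pd sqrt_discr_less_coef_a [OF hyp1]
          sqrt_discr_less_coef_a [OF hyp2] pd_radius_nonneg]
    by blast
  then show ?thesis
    by (simp add: PD_eq_cball cball_subset_cball_iff)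
qed

lemma cball_subset_norm_bounds:
  fixes c1 c2 :: "'a::euclidean_space"
  assumes "cball c1 r1 \<subseteq> cball c2 r2" and "0 \<le> r1"
  shows "norm c1 + r1 \<le> norm c2 + r2" and "norm c2 - r2 \<le> norm c1 - r1"
proof -
  have "dist c1 c2 + r1 \<le> r2"
    using assms by (auto simp: cball_subset_cball_iff)
  moreover have "norm c1 \<le> norm c2 + dist c1 c2" "norm c2 \<le> norm c1 + dist c1 c2"
    using norm_triangle_sub [of c1 c2] norm_triangle_sub [of c2 c1]
    by (simp_all add: dist_norm norm_minus_commute)
  ultimately show "norm c1 + r1 \<le> norm c2 + r2" and "norm c2 - r2 \<le> norm c1 - r1"
    by linarith+
qed

theorem theorem10p2:
  fixes A1 A2 :: "real^2^2"
  assumes "\<forall>z \<in> eigenvalues2 A1. \<not> (Im z = 0 \<and> Re z \<le> 0)"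
      and "\<forall>z \<in> eigenvalues2 A2. \<not> (Im z = 0 \<and> Re z \<le> 0)"
      and "PD A1 \<subseteq> PD A2"
  shows "opnorm2 (mlog A1) \<le> opnorm2 (mlog A2) \<and> floor2 (mlog A1) \<ge> floor2 (mlog A2)"
proof -
  have "cball (pd_center (mlog A1)) (pd_radius (mlog A1)) \<subseteq> cball (pd_center (mlog A2)) (pd_radius (mlog A2))"
    using PD_mlog_mono [OF assms] by (simp add: PD_eq_cball)
  from cball_subset_norm_bounds [OF this] show ?thesis
    by (simp add: opnorm2_eq_pd floor2_eq_pd pd_radius_nonneg)
qed

end
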